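(* Let $n\ge1$, $k\ge1$, $A\in\{1,\dots,n\}^k$ and $B\subset\{1,\dots,n\}$ with $|B|=k+1$. Let $\tilde A=c^{1-\rho(A,B)}A$, $\tilde B=c^{1-\rho(A,B)}B$, let $I=(i_1\le\dots\le i_k)$ be the non-decreasing rearrangement of $\tilde A$, and $(j_1,\dots,j_k)=\Pi(I,\tilde B)$. Then $i_l<j_l$ for all $l$ and the chain of transpositions $((i_1\,j_1),\dots,(i_k\,j_k))$ belongs to $\Sigma^*_n(k)$.
   Context: $\mathfrak S_n$ is the symmetric group on $\{1,\dots,n\}$; products are composed right to left. $\mathsf T_n$ is the set of transpositions, always written $(i\,j)$ with $i<j$. For $\sigma\in\mathfrak S_n$, $|\sigma|=n-(\text{number of cycles of }\sigma\text{, fixed points counted})$; $\sigma_1\preccurlyeq\sigma_2$ iff $|\sigma_2|=|\sigma_1|+|\sigma_1^{-1}\sigma_2|$. $\Sigma_n(k)=\{(\tau_1,\dots,\tau_k)\in(\mathsf T_n)^k : |\tau_1\cdots\tau_k|=k,\ \tau_1\cdots\tau_k\preccurlyeq(1\,2\,\dots\,n)\}$, and $\Sigma^*_n(k)$ is the set of its elements $((i_1\,j_1),\dots,(i_k\,j_k))$ with $i_1\le\dots\le i_k$. Let $c=(1\,2\,\dots\,n)$ be the cyclic shift $x\mapsto x+1$ for $x<n$, $n\mapsto1$, acting componentwise on sequences and elementwise on sets; powers are taken modulo $n$. Parking process: given $E=(e_1,\dots,e_k)\in\{1,\dots,n\}^k$ and $O\subset\{1,\dots,n\}$ with $|O|=k+1$,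 define $p_k=c^{r}(e_k)$ where $r=\min\{s\in\{1,\dots,n\}: c^s(e_k)\in O\}$ and, backwards, $p_l=c^{r}(e_l)$ where $r=\min\{s\in\{1,\dots,n\}: c^s(e_l)\in O\setminus\{p_{l+1},\dots,p_k\}\}$. Write $\Pi(E,O)=(p_1,\dots,p_k)$; the unique element of $O\setminus\{p_1,\dots,p_k\}$ is the residue $\rho(E,O)$. *)

theory Defs
  imports Main "HOL-Combinatorics.Transposition"
begin

text \<open>Permutations of {1..n} are functions nat => nat (identity outside {1..n}).
  The cycles of sigma, fixed points counted, are the orbits of the points of {1..n}.\<close>

definition orb :: "(nat \<Rightarrow> nat) \<Rightarrow> nat \<Rightarrow> nat set" where
  "orb \<sigma> x = {y. \<exists>m. (\<sigma> ^^ m) x = y}"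

definition num_cycles :: "nat \<Rightarrow> (nat \<Rightarrow> nat) \<Rightarrow> nat" where
  "num_cycles n \<sigma> = card (orb \<sigma> ` {1..n})"

definition plen :: "nat \<Rightarrow> (nat \<Rightarrow> nat) \<Rightarrow> nat" where
  "plen n \<sigma> = n - num_cycles n \<sigma>"

definition preceq :: "nat \<Rightarrow> (nat \<Rightarrow> nat) \<Rightarrow> (nat \<Rightarrow> nat) \<Rightarrow> bool" where
  "preceq n \<sigma>1 \<sigma>2 \<longleftrightarrow> plen n \<sigma>2 = plen n \<sigma>1 + plen n (inv \<sigma>1 \<circ> \<sigma>2)"

text \<open>Cyclic shift c = (1 2 ... n), and its powers.\<close>
definition cshift :: "nat \<Rightarrow> nat \<Rightarrow> nat" where
  "cshift n x = (if x < n then x + 1 else 1)"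

definition long_cycle :: "nat \<Rightarrow> nat \<Rightarrow> nat" where
  "long_cycle n x = (if x \<in> {1..n} then cshift n x else x)"

definition cpow :: "nat \<Rightarrow> int \<Rightarrow> nat \<Rightarrow> nat" where
  "cpow n e = cshift n ^^ nat (e mod int n)"

text \<open>Transpositions (i j), i<j, in S_n; a chain is a list of pairs (i,j);
  the product tau_1 ... tau_k is composed right to left.\<close>
definition is_transp :: "nat \<Rightarrow> nat \<times> nat \<Rightarrow> bool" where
  "is_transp n t \<longleftrightarrow> 1 \<le> fst t \<and> fst t < snd t \<and> snd t \<le> n"

definition chain_prod :: "(nat \<times> nat) list \<Rightarrow> nat \<Rightarrow> nat" where
  "chain_prod ts = foldr (\<lambda>t f. transpose (fst t) (snd t) \<circ> f) ts id"

definition Sigma_chains :: "nat \<Rightarrow> nat \<Rightarrow> (nat \<times> nat) list set" where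
  "Sigma_chains n k = {ts. length ts = k \<and> (\<forall>t\<in>set ts. is_transp n t)
      \<and> plen n (chain_prod ts) = k \<and> preceq n (chain_prod ts) (long_cycle n)}"

definition Sigma_star :: "nat \<Rightarrow> nat \<Rightarrow> (nat \<times> nat) list set" where
  "Sigma_star n k = {ts \<in> Sigma_chains n k. sorted (map fst ts)}"

text \<open>Parking process, computed backwards: park n Os (e_1 # ... # e_k) = (p_1,...,p_k).\<close>
fun park :: "nat \<Rightarrow> nat set \<Rightarrow> nat list \<Rightarrow> nat list" where
  "park n Os [] = []"
| "park n Os (e # es) =
    (let ps = park n Os es;
         r = (LEAST s. 1 \<le> s \<and> s \<le> n \<and> (cshift n ^^ s) e \<in> Os - set ps)
     in (cshift n ^^ r) e # ps)"

definition residue :: "nat \<Rightarrow> nat list \<Rightarrow> nat set \<Rightarrow> nat" where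
  "residue n E Os = (THE x. x \<in> Os - set (park n Os E))"

end

theory Submission
  imports Defs "HOL-Combinatorics.Permutations" "HOL-Combinatorics.Orbits"
begin

(* Rotating cars and spots by c^(1-rho) commutes with parking and turns the
   residue rho into the spot 1; and the set of occupied spots does not depend on the order
   in which the cars arrive, so after sorting the cars spot 1 is still left free.  For a
   sorted list of cars parking with spot 1 free, no car wraps around (hence i_l < j_l), and
   when the last car x parks at p, the points of (x, p] are untouched by the earlier
   transpositions.  Appending (x p) therefore attaches the fixed point p to a cycle of the
   product sigma, and cuts the cycle of sigma^-1 c through x, x+1, ..., p in two.  By
   induction sigma has n - k cycles and sigma^-1 c has k + 1, which is membership in
   Sigma*_n(k). *)

lemma orb_self: "z \<in> orb h z"
  unfolding orb_def by (auto intro: exI[of _ 0])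

lemma orb_step: "h z \<in> orb h z"
  unfolding orb_def by (auto intro: exI[of _ 1])

lemma orb_eq_orbit: "permutation h \<Longrightarrow> orb h z = orbit h z"
  unfolding orb_def by (auto simp: orbit_altdef_permutation)

lemma orb_eq: "permutation h \<Longrightarrow> w \<in> orb h z \<Longrightarrow> orb h w = orb h z"
  by (simp add: orb_eq_orbit)
     (meson orbit_swap orbit_trans permutation_self_in_orbit subsetI subset_antisym)

lemma orb_closed:
  assumes "\<And>w. w \<in> T \<Longrightarrow> h w \<in> T" "z \<in> T" shows "orb h z \<subseteq> T"
proof
  fix y assume "y \<in> orb h z"
  then obtain m where "y = (h ^^ m) z" unfolding orb_def by auto
  moreover have "(h ^^ m) z \<in> T" for m using assms by (induct m) auto
  ultimately show "y \<in> T" by simp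
qed

lemma orb_fixpoint: "h p = p \<Longrightarrow> orb h p = {p}"
proof -
  assume h: "h p = p"
  have "(h ^^ m) p = p" for m by (induct m) (auto simp: h)
  then show ?thesis unfolding orb_def by auto
qed

definition fused_orb :: "(nat \<Rightarrow> nat) \<Rightarrow> nat \<Rightarrow> nat \<Rightarrow> nat \<Rightarrow> nat set" where
  "fused_orb f a b z =
     (if z \<in> orb f a \<union> orb f b then orb f a \<union> orb f b else orb f z)"

lemma fused_orb_self: "z \<in> fused_orb f a b z"
  by (auto simp: fused_orb_def orb_self)

lemma fused_orb_eq:
  assumes "permutation f" "w \<in> fused_orb f a b z"
  shows "fused_orb f a b w = fused_orb f a b z"
proof (cases "z \<in> orb f a \<union> orb f b")
  case True
  then show ?thesis using assms(2) by (simp add: fused_orb_def)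
next
  case False
  then have ow: "orb f w = orb f z"
    using assms orb_eq by (auto simp: fused_orb_def)
  have "w \<notin> orb f a \<union> orb f b"
    using False ow orb_eq[OF assms(1)] orb_self[of z f] by (metis Un_iff)
  then show ?thesis using False ow by (simp add: fused_orb_def)
qed

lemma orb_sub_fused_orb: "permutation f \<Longrightarrow> orb f z \<subseteq> fused_orb f a b z"
  unfolding fused_orb_def using orb_eq by auto

lemma orb_eq_fused_orb:
  assumes pf: "permutation f" and pg: "permutation g"
    and g_in: "\<And>z. g z \<in> fused_orb f a b z"
    and f_in: "\<And>z. f z \<in> orb g z"
    and ab: "b \<in> orb g a"
  shows "orb g z = fused_orb f a b z"
proof
  show "orb g z \<subseteq> fused_orb f a b z"
  proof (rule orb_closed)
    fix w assume "w \<in> fused_orb f a b z"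
    then show "g w \<in> fused_orb f a b z" using g_in[of w] fused_orb_eq[OF pf] by metis
  qed (rule fused_orb_self)
  have f_sub_g: "orb f y \<subseteq> orb g y" for y
  proof (rule orb_closed)
    fix w assume "w \<in> orb g y"
    then show "f w \<in> orb g y" using f_in[of w] orb_eq[OF pg] by metis
  qed (rule orb_self)
  have ga: "orb g b = orb g a" using orb_eq[OF pg ab] .
  show "fused_orb f a b z \<subseteq> orb g z"
  proof (cases "z \<in> orb f a \<union> orb f b")
    case True
    then have "orb g z = orb g a"
      using f_sub_g[of a] f_sub_g[of b] ga orb_eq[OF pg] by blast
    then show ?thesis
      using True f_sub_g[of a] f_sub_g[of b] ga by (auto simp: fused_orb_def)
  qed (use f_sub_g in \<open>simp add: fused_orb_def\<close>)
qed

lemma card_fused_orbits: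
  assumes fin: "finite S" and pf: "permutation f" and a: "a \<in> S" and b: "b \<in> S"
    and ab: "orb f a \<noteq> orb f b"
    and g: "\<And>z. orb g z = fused_orb f a b z"
  shows "card (orb g ` S) + 1 = card (orb f ` S)"
proof -
  define U where "U = orb f a \<union> orb f b"
  have gU: "z \<in> U \<Longrightarrow> orb g z = U" and gf: "z \<notin> U \<Longrightarrow> orb g z = orb f z" for z
    by (simp_all add: g fused_orb_def U_def)
  have other: "z \<notin> U \<longleftrightarrow> orb f z \<noteq> orb f a \<and> orb f z \<noteq> orb f b" for z
  proof
    assume "z \<notin> U"
    then show "orb f z \<noteq> orb f a \<and> orb f z \<noteq> orb f b"
      unfolding U_def using orb_self[of z f] by auto
  next
    assume "orb f z \<noteq> orb f a \<and> orb f z \<noteq> orb f b"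
    then show "z \<notin> U" unfolding U_def using orb_eq[OF pf, of z] by auto
  qed
  have aU: "a \<in> U" unfolding U_def by (simp add: orb_self)
  have img: "orb g ` S = insert U (orb f ` S - {orb f a, orb f b})"
  proof (intro set_eqI iffI)
    fix X assume "X \<in> orb g ` S"
    then obtain z where "z \<in> S" "X = orb g z" by auto
    then show "X \<in> insert U (orb f ` S - {orb f a, orb f b})"
      using other[of z] gU[of z] gf[of z] by (cases "z \<in> U") auto
  next
    fix X assume X: "X \<in> insert U (orb f ` S - {orb f a, orb f b})"
    show "X \<in> orb g ` S"
    proof (cases "X = U")
      case True
      then show ?thesis using a gU[OF aU] by blast
    next
      case False
      then obtain z where "z \<in> S" "X = orb f z" "z \<notin> U" using X other by auto
      then show ?thesis using gf by blast
    qed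
  qed
  have "U \<notin> orb f ` S - {orb f a, orb f b}"
  proof
    assume "U \<in> orb f ` S - {orb f a, orb f b}"
    then obtain z where "U = orb f z" "orb f z \<noteq> orb f a" by auto
    then show False using aU orb_eq[OF pf, of a z] by simp
  qed
  then have "card (orb g ` S) = card (orb f ` S - {orb f a, orb f b}) + 1"
    using img fin by simp
  moreover have "card (orb f ` S - {orb f a, orb f b}) + 2 = card (orb f ` S)"
  proof -
    have "{orb f a, orb f b} \<subseteq> orb f ` S" "card {orb f a, orb f b} = 2"
      using a b ab by auto
    then show ?thesis
      using fin card_Diff_subset[of "{orb f a, orb f b}" "orb f ` S"]
        card_mono[of "orb f ` S" "{orb f a, orb f b}"] by simp
  qed
  ultimately show ?thesis by simp
qed

text \<open>Multiplying on the left by the transposition of two points in distinct orbits fuses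
  these orbits.  The hypothesis \<open>link\<close> always holds; we only require it where it is evident.\<close>
lemma card_orbits_transpose_merge:
  assumes fin: "finite S" and pf: "permutation f" and a: "a \<in> S" and b: "b \<in> S"
    and ab: "orb f a \<noteq> orb f b"
    and link: "b \<in> orb (transpose a b \<circ> f) a"
  shows "card (orb (transpose a b \<circ> f) ` S) + 1 = card (orb f ` S)"
proof -
  let ?g = "transpose a b \<circ> f"
  have pg: "permutation ?g" by (rule permutation_compose[OF permutation_swap_id pf])
  have "orb ?g z = fused_orb f a b z" for z
  proof (rule orb_eq_fused_orb[OF pf pg _ _ link])
    fix z
    show "?g z \<in> fused_orb f a b z"
    proof (cases "f z \<in> {a, b}")
      case False
      then show ?thesis using orb_step[of f z] orb_sub_fused_orb[OF pf] by auto
    next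
      case True
      have "orb f z = orb f (f z)" using orb_eq[OF pf orb_step] by simp
      then have "z \<in> orb f a \<union> orb f b" using True orb_self[of z f] by auto
      then show ?thesis using True orb_self[of a f] orb_self[of b f]
        by (auto simp: fused_orb_def)
    qed
    show "f z \<in> orb ?g z"
    proof (cases "?g z \<in> {a, b}")
      case False
      then have "f z \<notin> {a, b}" by auto
      then have "?g z = f z" by simp
      then show ?thesis using orb_step[of ?g z] by simp
    next
      case True
      have "orb ?g z = orb ?g (?g z)" by (rule orb_eq[OF pg orb_step, symmetric])
      also have "\<dots> = orb ?g a"
        using True orb_eq[OF pg link] by (elim insertE) simp_all
      finally have "{a, b} \<subseteq> orb ?g z" using link orb_self[of a ?g] by simp
      moreover have "f z \<in> {a, b}" using True by (auto simp: transpose_def split: if_splits)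
      ultimately show ?thesis by blast
    qed
  qed
  then show ?thesis by (rule card_fused_orbits[OF fin pf a b ab])
qed

text \<open>Indeed \<open>f \<circ> (a b) = (f a  b) \<circ> f\<close>.\<close>
lemma card_orbits_attach_fixed_point:
  assumes fin: "finite S" and perm: "f permutes S" and a: "a \<in> S" and b: "b \<in> S"
    and ab: "a \<noteq> b" and fb: "f b = b"
  shows "card (orb (f \<circ> transpose a b) ` S) + 1 = card (orb f ` S)"
proof -
  have pf: "permutation f" using fin perm permutation_permutes by blast
  have inj: "inj f" by (rule permutes_inj[OF perm])
  have fa: "f a \<in> S" using permutes_in_image[OF perm] a by simp
  have conj: "f \<circ> transpose a b = transpose b (f a) \<circ> f"
  proof
    fix z
    show "(f \<circ> transpose a b) z = (transpose b (f a) \<circ> f) z"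
    proof (cases "z = a \<or> z = b")
      case True
      then show ?thesis using fb by auto
    next
      case False
      then have "f z \<noteq> f a" "f z \<noteq> b" using inj fb by (metis injD)+
      then show ?thesis using False by simp
    qed
  qed
  have link: "f a \<in> orb (transpose b (f a) \<circ> f) b"
    using orb_step[of "transpose b (f a) \<circ> f" b] fb by simp
  have "a \<notin> orb f b" using orb_fixpoint[of f b, OF fb] ab by simp
  then have "orb f b \<noteq> orb f (f a)"
    using orb_eq[OF pf orb_step, of a] orb_self[of a f] by auto
  then show ?thesis
    unfolding conj by (rule card_orbits_transpose_merge[OF fin pf b fa _ link])
qed

text \<open>The closed walk \<open>a, g a, \<dots>\<close> up to \<open>b\<close>
  becomes a cycle of \<open>(a b) \<circ> g\<close> avoiding \<open>b\<close>.\<close>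
lemma card_orbits_transpose_split:
  assumes fin: "finite S" and perm: "g permutes S" and a: "a \<in> S" and b: "b \<in> S"
    and ab: "a \<noteq> b" and walk: "(g ^^ m) a = b"
    and avoid: "\<And>j. 0 < j \<Longrightarrow> j < m \<Longrightarrow> (g ^^ j) a \<notin> {a, b}"
  shows "card (orb (transpose a b \<circ> g) ` S) = card (orb g ` S) + 1"
proof -
  let ?f = "transpose a b \<circ> g"
  define T where "T = (\<lambda>j. (g ^^ j) a) ` {..<m}"
  have pg: "permutation g" using fin perm permutation_permutes by blast
  have pf: "permutation ?f" by (rule permutation_compose[OF permutation_swap_id pg])
  have m: "0 < m" using walk ab by (cases m) auto
  have "orb ?f a \<subseteq> T"
  proof (rule orb_closed)
    fix w assume "w \<in> T"
    then obtain j where j: "j < m" "w = (g ^^ j) a" by (auto simp: T_def)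
    show "?f w \<in> T"
    proof (cases "Suc j = m")
      case True
      then have "g w = b" using j walk by (metis funpow.simps(2) comp_apply)
      then have "?f w = a" by simp
      then show ?thesis using m by (auto simp: T_def intro: image_eqI[of _ _ 0])
    next
      case False
      then have "?f w = (g ^^ Suc j) a" using j avoid[of "Suc j"] by simp
      moreover have "Suc j < m" using j False by simp
      ultimately show ?thesis unfolding T_def by (intro image_eqI[of _ _ "Suc j"]) auto
    qed
  qed (use m in \<open>auto simp: T_def intro: image_eqI[of _ _ 0]\<close>)
  moreover have "b \<notin> T"
  proof
    assume "b \<in> T"
    then obtain j where "j < m" "(g ^^ j) a = b" by (auto simp: T_def)
    then show False using ab avoid[of j] by (cases j) auto
  qed
  ultimately have distinct_orbits: "orb ?f a \<noteq> orb ?f b" using orb_self[of b ?f] by auto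
  have undo: "transpose a b \<circ> ?f = g" by (rule ext) simp
  have "b \<in> orb (transpose a b \<circ> ?f) a" unfolding undo orb_def using walk by auto
  from card_orbits_transpose_merge[OF fin pf a b distinct_orbits this]
  show ?thesis unfolding undo by (rule sym)
qed

lemma cshift_pow_in: "1 \<le> n \<Longrightarrow> x \<in> {1..n} \<Longrightarrow> (cshift n ^^ s) x \<in> {1..n}"
  by (induct s) (auto simp: cshift_def)

lemma cshift_pow_add: "x + s \<le> n \<Longrightarrow> (cshift n ^^ s) x = x + s"
  by (induct s) (auto simp: cshift_def)

lemma cshift_pow_wrap: "1 \<le> x \<Longrightarrow> x \<le> n \<Longrightarrow> (cshift n ^^ (n - x + 1)) x = 1"
  using cshift_pow_add[of x "n - x" n] by (simp add: cshift_def)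

lemma cshift_pow_comp: "(cshift n ^^ a) ((cshift n ^^ b) x) = (cshift n ^^ (a + b)) x"
  by (simp add: funpow_add)

lemma cshift_reach:
  assumes "x \<in> {1..n}" "y \<in> {1..n}" shows "\<exists>s. 1 \<le> s \<and> s \<le> n \<and> (cshift n ^^ s) x = y"
proof (cases "x < y")
  case True
  then show ?thesis using assms cshift_pow_add[of x "y - x" n] by (intro exI[of _ "y - x"]) auto
next
  case False
  have "(cshift n ^^ (y - 1)) 1 = y" using assms cshift_pow_add[of 1 "y - 1" n] by auto
  then have "(cshift n ^^ (y - 1 + (n - x + 1))) x = y"
    using assms cshift_pow_wrap[of x n] cshift_pow_comp by (metis atLeastAtMost_iff)
  moreover have "y - 1 + (n - x + 1) = n - x + y" using assms by auto
  ultimately have "(cshift n ^^ (n - x + y)) x = y" by (simp add: add.commute)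
  then show ?thesis using assms False by (intro exI[of _ "n - x + y"]) auto
qed

lemma cshift_pow_inj: "1 \<le> n \<Longrightarrow> inj_on (cshift n ^^ e) {1..n}"
proof (induct e)
  case (Suc e)
  have "inj_on (cshift n) {1..n}" by (auto simp: inj_on_def cshift_def split: if_splits)
  then have "inj_on (cshift n \<circ> (cshift n ^^ e)) {1..n}"
    using Suc cshift_pow_in by (intro comp_inj_on) (auto intro: inj_on_subset)
  then show ?case by (simp add: o_def)
qed simp

lemma long_cycle_pow: "1 \<le> n \<Longrightarrow> x \<in> {1..n} \<Longrightarrow> (long_cycle n ^^ s) x = (cshift n ^^ s) x"
proof (induct s)
  case (Suc s)
  then show ?case using cshift_pow_in[of n x s] by (simp add: long_cycle_def)
qed simp

lemma long_cycle_permutes: "1 \<le> n \<Longrightarrow> long_cycle n permutes {1..n}"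
proof (rule bij_imp_permutes)
  assume n: "1 \<le> n"
  have same: "x \<in> {1..n} \<Longrightarrow> long_cycle n x = cshift n x" for x
    by (simp add: long_cycle_def)
  have "inj_on (cshift n) {1..n}" using cshift_pow_inj[OF n, of 1] by simp
  moreover have "cshift n ` {1..n} = {1..n}"
  proof
    show "cshift n ` {1..n} \<subseteq> {1..n}" using cshift_pow_in[OF n, of _ 1] by auto
    show "{1..n} \<subseteq> cshift n ` {1..n}"
    proof
      fix y assume y: "y \<in> {1..n}"
      show "y \<in> cshift n ` {1..n}"
      proof (cases "y = 1")
        case True
        then show ?thesis using n by (intro image_eqI[of _ _ n]) (auto simp: cshift_def)
      next
        case False
        then show ?thesis using y by (intro image_eqI[of _ _ "y - 1"]) (auto simp: cshift_def)
      qed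
    qed
  qed
  ultimately have "bij_betw (cshift n) {1..n} {1..n}" by (simp add: bij_betw_def)
  then show "bij_betw (long_cycle n) {1..n} {1..n}" using bij_betw_cong same by blast
qed (auto simp: long_cycle_def)

lemma num_cycles_id: "num_cycles n id = n"
proof -
  have "orb id x = {x}" for x by (rule orb_fixpoint) simp
  then have "orb id ` {1..n} = (\<lambda>x. {x}) ` {1..n}" by auto
  moreover have "card ((\<lambda>x. {x}) ` {1..n}) = n" by (subst card_image) (auto simp: inj_on_def)
  ultimately show ?thesis by (simp add: num_cycles_def)
qed

lemma num_cycles_long_cycle: "1 \<le> n \<Longrightarrow> num_cycles n (long_cycle n) = 1"
proof -
  assume n: "1 \<le> n"
  have "orb (long_cycle n) x = {1..n}" if x: "x \<in> {1..n}" for x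
  proof
    show "orb (long_cycle n) x \<subseteq> {1..n}"
      by (rule orb_closed) (use x permutes_in_image[OF long_cycle_permutes[OF n]] in auto)
    show "{1..n} \<subseteq> orb (long_cycle n) x"
    proof
      fix y assume "y \<in> {1..n}"
      then obtain s where "(cshift n ^^ s) x = y" using cshift_reach x by blast
      then show "y \<in> orb (long_cycle n) x" using long_cycle_pow[OF n x] unfolding orb_def by auto
    qed
  qed
  then have "orb (long_cycle n) ` {1..n} = {{1..n}}" using n by auto
  then show ?thesis by (simp add: num_cycles_def)
qed

lemma num_cycles_append_transposition:
  assumes perm: "\<sigma> permutes {1..n}" and x: "x \<in> {1..n}" and p: "p \<in> {1..n}" and xp: "x < p"
    and fix_p: "\<sigma> p = p"
  shows "num_cycles n (\<sigma> \<circ> transpose x p) + 1 = num_cycles n \<sigma>"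
  using card_orbits_attach_fixed_point[OF _ perm x p _ fix_p] xp by (simp add: num_cycles_def)

text \<open>... while if \<open>\<sigma>\<close> fixes all of \<open>(x, p]\<close>, the cycle of the complementary permutation
  \<open>\<sigma>\<^sup>-\<^sup>1 c\<close> through \<open>x\<close> runs \<open>x, x + 1, \<dots>, p\<close>, and the transposition cuts off the cycle
  \<open>(x, x + 1, \<dots>, p - 1)\<close>: one cycle more.\<close>
lemma num_cycles_complement_append_transposition:
  assumes perm: "\<sigma> permutes {1..n}" and x: "x \<in> {1..n}" and p: "p \<in> {1..n}" and xp: "x < p"
    and fixed: "\<And>y. x < y \<Longrightarrow> y \<le> p \<Longrightarrow> \<sigma> y = y"
  shows "num_cycles n (inv (\<sigma> \<circ> transpose x p) \<circ> long_cycle n)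
           = num_cycles n (inv \<sigma> \<circ> long_cycle n) + 1"
proof -
  have n: "1 \<le> n" using x by simp
  define \<pi> where "\<pi> = inv \<sigma> \<circ> long_cycle n"
  have perm_\<pi>: "\<pi> permutes {1..n}"
    unfolding \<pi>_def by (rule permutes_compose[OF long_cycle_permutes[OF n] permutes_inv[OF perm]])
  have "inv (\<sigma> \<circ> transpose x p) = transpose x p \<circ> inv \<sigma>"
  proof -
    have "permutation \<sigma>" using perm permutation_permutes by blast
    from permutation_inverse_compose[OF this permutation_swap_id, of x p]
    show ?thesis by simp
  qed
  then have new: "inv (\<sigma> \<circ> transpose x p) \<circ> long_cycle n = transpose x p \<circ> \<pi>"
    by (simp add: \<pi>_def o_assoc)
  have step: "\<pi> y = y + 1" if "x \<le> y" "y < p" for y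
  proof -
    have "long_cycle n y = y + 1" using that x p by (simp add: long_cycle_def cshift_def)
    moreover have "inv \<sigma> (y + 1) = y + 1"
      using fixed[of "y + 1"] that permutes_inv_eq[OF perm] by simp
    ultimately show ?thesis by (simp add: \<pi>_def)
  qed
  have walk: "(\<pi> ^^ j) x = x + j" if "j \<le> p - x" for j
    using that by (induct j) (simp_all add: step)
  have "card (orb (transpose x p \<circ> \<pi>) ` {1..n}) = card (orb \<pi> ` {1..n}) + 1"
  proof (rule card_orbits_transpose_split[OF _ perm_\<pi> x p])
    show "(\<pi> ^^ (p - x)) x = p" using walk[of "p - x"] xp by simp
    show "(\<pi> ^^ j) x \<notin> {x, p}" if "0 < j" "j < p - x" for j
      using walk[of j] that by simp
  qed (use xp in auto)
  then show ?thesis unfolding new by (simp add: num_cycles_def \<pi>_def)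
qed

definition next_in :: "nat \<Rightarrow> nat set \<Rightarrow> nat \<Rightarrow> nat" where
  "next_in n F e = (cshift n ^^ (LEAST s. 1 \<le> s \<and> s \<le> n \<and> (cshift n ^^ s) e \<in> F)) e"

lemma park_Cons: "park n Os (e # es) = next_in n (Os - set (park n Os es)) e # park n Os es"
  by (simp add: Let_def next_in_def)

declare park.simps(2)[simp del]

lemma next_in_props:
  assumes "F \<subseteq> {1..n}" "F \<noteq> {}" "e \<in> {1..n}"
  obtains r where "1 \<le> r" "r \<le> n" "(cshift n ^^ r) e \<in> F"
    "\<And>s. 1 \<le> s \<Longrightarrow> s < r \<Longrightarrow> (cshift n ^^ s) e \<notin> F" "next_in n F e = (cshift n ^^ r) e"
proof -
  let ?P = "\<lambda>s. 1 \<le> s \<and> s \<le> n \<and> (cshift n ^^ s) e \<in> F"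
  have ex: "\<exists>s. ?P s" using assms cshift_reach by blast
  show ?thesis
  proof (rule that)
    show "1 \<le> Least ?P" "Least ?P \<le> n" "(cshift n ^^ Least ?P) e \<in> F"
      using LeastI_ex[OF ex] by auto
    show "(cshift n ^^ s) e \<notin> F" if "1 \<le> s" "s < Least ?P" for s
      using not_less_Least[of s ?P] LeastI_ex[OF ex] that by auto
  qed (simp add: next_in_def)
qed

lemma next_in_eqI:
  assumes "1 \<le> r" "r \<le> n" "(cshift n ^^ r) e \<in> F"
    and "\<And>s. 1 \<le> s \<Longrightarrow> s < r \<Longrightarrow> (cshift n ^^ s) e \<notin> F"
  shows "next_in n F e = (cshift n ^^ r) e"
proof -
  have "(LEAST s. 1 \<le> s \<and> s \<le> n \<and> (cshift n ^^ s) e \<in> F) = r"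
    by (rule Least_equality) (use assms not_less in auto)
  then show ?thesis by (simp add: next_in_def)
qed

lemma next_in_mem: "F \<subseteq> {1..n} \<Longrightarrow> F \<noteq> {} \<Longrightarrow> e \<in> {1..n} \<Longrightarrow> next_in n F e \<in> F"
  by (metis next_in_props)

lemma next_in_range: "1 \<le> n \<Longrightarrow> e \<in> {1..n} \<Longrightarrow> next_in n F e \<in> {1..n}"
  unfolding next_in_def by (rule cshift_pow_in)

lemma park_in_range:
  assumes "1 \<le> n" shows "set E \<subseteq> {1..n} \<Longrightarrow> set (park n Os E) \<subseteq> {1..n}"
proof (induct E)
  case (Cons e es)
  then show ?case using next_in_range[OF assms, of e] by (simp add: park_Cons)
qed simp

lemma park_distinct:
  assumes "Os \<subseteq> {1..n}" "set E \<subseteq> {1..n}" "length E \<le> card Os"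
  shows "length (park n Os E) = length E \<and> distinct (park n Os E) \<and> set (park n Os E) \<subseteq> Os"
  using assms(2,3)
proof (induct E)
  case (Cons e es)
  let ?ps = "park n Os es"
  have IH: "length ?ps = length es" "distinct ?ps" "set ?ps \<subseteq> Os" using Cons by auto
  have "finite Os" using assms(1) finite_subset by blast
  then have "card (Os - set ?ps) = card Os - length es"
    using IH by (simp add: card_Diff_subset distinct_card)
  then have "card (Os - set ?ps) > 0" using Cons.prems by simp
  then have "Os - set ?ps \<noteq> {}" by (metis card_gt_0_iff)
  then have "next_in n (Os - set ?ps) e \<in> Os - set ?ps"
    using next_in_mem[of "Os - set ?ps" n e] assms(1) Cons.prems by auto
  then show ?case using IH by (simp add: park_Cons)
qed simp

text \<open>Cars are processed from the back of the queue, so a queue splits at any point.\<close>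
lemma park_append: "park n Os (xs @ zs) = park n (Os - set (park n Os zs)) xs @ park n Os zs"
proof (induct xs)
  case (Cons x xs)
  have "Os - set (park n (Os - set (park n Os zs)) xs @ park n Os zs)
        = Os - set (park n Os zs) - set (park n (Os - set (park n Os zs)) xs)" by auto
  then show ?case using Cons by (simp add: park_Cons)
qed simp

lemma next_in_shrink:
  assumes "G \<subseteq> F" "F \<subseteq> {1..n}" "F \<noteq> {}" "e \<in> {1..n}" "next_in n F e \<in> G"
  shows "next_in n G e = next_in n F e"
proof -
  obtain r where "1 \<le> r" "r \<le> n" "\<And>s. 1 \<le> s \<Longrightarrow> s < r \<Longrightarrow> (cshift n ^^ s) e \<notin> F"
    "next_in n F e = (cshift n ^^ r) e"
    using next_in_props[OF assms(2-4)] by blast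
  then show ?thesis using assms(1,5) by (subst next_in_eqI[of r]) auto
qed

lemma next_in_remove:
  assumes F: "F \<subseteq> {1..n}" and e: "e \<in> {1..n}" and x: "x = next_in n F e"
    and ne: "F - {x} \<noteq> {}"
  shows "next_in n (F - {x}) e = next_in n (F - {x}) x"
proof -
  have F': "F - {x} \<subseteq> {1..n}" using F by auto
  obtain r where r: "1 \<le> r" "\<And>s. 1 \<le> s \<Longrightarrow> s < r \<Longrightarrow> (cshift n ^^ s) e \<notin> F"
      "x = (cshift n ^^ r) e"
    using next_in_props[OF F _ e] ne x by blast
  obtain r' where r': "r' \<le> n" "(cshift n ^^ r') e \<in> F - {x}" "1 \<le> r'"
      "\<And>s. 1 \<le> s \<Longrightarrow> s < r' \<Longrightarrow> (cshift n ^^ s) e \<notin> F - {x}"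
      "next_in n (F - {x}) e = (cshift n ^^ r') e"
    using next_in_props[OF F' ne e] by blast
  have "r < r'"
  proof (rule ccontr)
    assume "\<not> r < r'"
    then have "r' < r \<or> r' = r" by auto
    then show False using r(2)[of r'] r(3) r' by auto
  qed
  have shifted: "(cshift n ^^ t) x = (cshift n ^^ (t + r)) e" for t
    using r(3) cshift_pow_comp by simp
  have "next_in n (F - {x}) x = (cshift n ^^ (r' - r)) x"
  proof (rule next_in_eqI)
    show "1 \<le> r' - r" "r' - r \<le> n" using \<open>r < r'\<close> r'(1) by auto
    show "(cshift n ^^ (r' - r)) x \<in> F - {x}" using shifted[of "r' - r"] r'(2) \<open>r < r'\<close> by simp
    show "(cshift n ^^ s) x \<notin> F - {x}" if "1 \<le> s" "s < r' - r" for s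
      using shifted[of s] r'(4)[of "s + r"] that by simp
  qed
  also have "\<dots> = (cshift n ^^ r') e" using shifted \<open>r < r'\<close> by simp
  finally show ?thesis using r'(5) by simp
qed

lemma next_in_swap:
  assumes F: "F \<subseteq> {1..n}" and a: "a \<in> {1..n}" and b: "b \<in> {1..n}" and c: "2 \<le> card F"
  shows "{next_in n F b, next_in n (F - {next_in n F b}) a}
       = {next_in n F a, next_in n (F - {next_in n F a}) b}"
proof -
  have ne: "F - {x} \<noteq> {}" for x
  proof
    assume "F - {x} = {}"
    then have "card F \<le> 1" using card_mono[of "{x}" F] by fastforce
    then show False using c by simp
  qed
  then have Fne: "F \<noteq> {}" by auto
  show ?thesis
  proof (cases "next_in n F a = next_in n F b")
    case True
    then show ?thesis
      using next_in_remove[OF F a refl ne] next_in_remove[OF F b refl ne] by simp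
  next
    case False
    have "next_in n (F - {next_in n F b}) a = next_in n F a"
      by (rule next_in_shrink[OF _ F Fne a]) (use next_in_mem[OF F Fne a] False in auto)
    moreover have "next_in n (F - {next_in n F a}) b = next_in n F b"
      by (rule next_in_shrink[OF _ F Fne b]) (use next_in_mem[OF F Fne b] False in auto)
    ultimately show ?thesis by auto
  qed
qed

lemma park_swap:
  assumes Os: "Os \<subseteq> {1..n}" and a: "a \<in> {1..n}" and b: "b \<in> {1..n}"
    and zs: "set zs \<subseteq> {1..n}" and len: "length zs + 2 \<le> card Os"
  shows "set (park n Os (a # b # zs)) = set (park n Os (b # a # zs))"
proof -
  define ps where "ps = park n Os zs"
  define F where "F = Os - set ps"
  have ps: "length ps = length zs" "distinct ps" "set ps \<subseteq> Os"
    using park_distinct[OF Os zs] len unfolding ps_def by auto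
  have "finite Os" using Os finite_subset by blast
  then have "card F = card Os - length zs"
    using ps unfolding F_def by (simp add: card_Diff_subset distinct_card)
  then have c2: "2 \<le> card F" using len by simp
  have FS: "F \<subseteq> {1..n}" using Os unfolding F_def by auto
  have "Os - set (next_in n F b # ps) = F - {next_in n F b}"
    "Os - set (next_in n F a # ps) = F - {next_in n F a}" unfolding F_def by auto
  then have "set (park n Os (a # b # zs)) = {next_in n F b, next_in n (F - {next_in n F b}) a} \<union> set ps"
    and "set (park n Os (b # a # zs)) = {next_in n F a, next_in n (F - {next_in n F a}) b} \<union> set ps"
    by (simp_all add: park_Cons ps_def[symmetric] F_def[symmetric] insert_commute)
  with next_in_swap[OF FS a b c2] show ?thesis by simp
qed

lemma park_append_cong:
  "set (park n Os zs1) = set (park n Os zs2) \<Longrightarrow>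
    set (park n Os (xs @ zs1)) = set (park n Os (xs @ zs2))"
  by (simp add: park_append)

lemma park_move:
  assumes Os: "Os \<subseteq> {1..n}"
  shows "e \<in> {1..n} \<Longrightarrow> set xs \<subseteq> {1..n} \<Longrightarrow> set ys \<subseteq> {1..n} \<Longrightarrow>
    length xs + length ys + 1 \<le> card Os \<Longrightarrow>
    set (park n Os (e # xs @ ys)) = set (park n Os (xs @ e # ys))"
proof (induct xs)
  case (Cons x xs)
  have "set (park n Os (e # x # (xs @ ys))) = set (park n Os (x # e # (xs @ ys)))"
    by (rule park_swap[OF Os]) (use Cons.prems in auto)
  also have "\<dots> = set (park n Os ([x] @ (e # xs @ ys)))" by simp
  also have "\<dots> = set (park n Os ([x] @ (xs @ e # ys)))"
    by (rule park_append_cong, rule Cons.hyps) (use Cons.prems in auto)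
  finally show ?case by simp
qed simp

lemma park_set_perm:
  assumes Os: "Os \<subseteq> {1..n}"
  shows "mset E1 = mset E2 \<Longrightarrow> set E1 \<subseteq> {1..n} \<Longrightarrow> length E1 \<le> card Os \<Longrightarrow>
    set (park n Os E1) = set (park n Os E2)"
proof (induct E1 arbitrary: E2)
  case (Cons e es)
  have "e \<in> set E2" using Cons.prems(1) by (metis list.set_intros(1) set_mset_mset)
  then obtain xs ys where E2: "E2 = xs @ e # ys" by (meson split_list)
  have m: "mset es = mset (xs @ ys)" using Cons.prems(1) E2 by simp
  then have xys: "set (xs @ ys) \<subseteq> {1..n}" "length (xs @ ys) = length es"
    using Cons.prems(2) by (metis set_mset_mset set_subset_Cons subset_trans, metis size_mset)
  have "set (park n Os (e # es)) = set (park n Os ([e] @ es))" by simp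
  also have "\<dots> = set (park n Os ([e] @ (xs @ ys)))"
    by (rule park_append_cong, rule Cons.hyps[OF m]) (use Cons.prems in auto)
  also have "\<dots> = set (park n Os (xs @ e # ys))"
    using park_move[OF Os, of e xs ys] Cons.prems xys by simp
  finally show ?case using E2 by simp
qed simp

lemma next_in_rotate:
  assumes n: "1 \<le> n" and F: "F \<subseteq> {1..n}" and e: "e \<in> {1..n}"
  shows "next_in n ((cshift n ^^ d) ` F) ((cshift n ^^ d) e) = (cshift n ^^ d) (next_in n F e)"
proof -
  let ?h = "cshift n ^^ d"
  have comm: "(cshift n ^^ s) (?h y) = ?h ((cshift n ^^ s) y)" for s y
    by (simp add: cshift_pow_comp add.commute)
  have mem: "?h ((cshift n ^^ s) e) \<in> ?h ` F \<longleftrightarrow> (cshift n ^^ s) e \<in> F" for s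
    by (rule inj_on_image_mem_iff[OF cshift_pow_inj[OF n] cshift_pow_in[OF n e] F])
  show ?thesis unfolding next_in_def by (simp add: comm mem)
qed

lemma park_rotate:
  assumes n: "1 \<le> n" and Os: "Os \<subseteq> {1..n}"
  shows "set E \<subseteq> {1..n} \<Longrightarrow>
    park n ((cshift n ^^ d) ` Os) (map (cshift n ^^ d) E) = map (cshift n ^^ d) (park n Os E)"
proof (induct E)
  case (Cons e es)
  let ?h = "cshift n ^^ d"
  have F: "Os - set (park n Os es) \<subseteq> {1..n}" using Os by auto
  have "?h ` Os - set (map ?h (park n Os es)) = ?h ` (Os - set (park n Os es))"
    using inj_on_image_set_diff[OF cshift_pow_inj[OF n] F park_in_range[OF n]] Cons.prems by simp
  then show ?case using Cons next_in_rotate[OF n F, of e d] by (simp add: park_Cons)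
qed simp

lemma next_in_no_wrap:
  assumes F: "F \<subseteq> {1..n}" and one: "1 \<in> F" and e: "e \<in> {1..n}" and ne: "next_in n F e \<noteq> 1"
  shows "e < next_in n F e \<and> (\<forall>y. e < y \<and> y < next_in n F e \<longrightarrow> y \<notin> F)"
proof -
  obtain r where r: "1 \<le> r" "\<And>s. 1 \<le> s \<Longrightarrow> s < r \<Longrightarrow> (cshift n ^^ s) e \<notin> F"
    "next_in n F e = (cshift n ^^ r) e"
    using next_in_props[OF F _ e] one by blast
  have wrap: "(cshift n ^^ (n - e + 1)) e = 1" using e cshift_pow_wrap by auto
  then have "\<not> n - e + 1 < r" "r \<noteq> n - e + 1" using r(2)[of "n - e + 1"] one ne r(3) by auto
  then have rl: "e + r \<le> n" using e by auto
  then have val: "next_in n F e = e + r" using r(3) cshift_pow_add by simp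
  have "y \<notin> F" if "e < y" "y < e + r" for y
    using r(2)[of "y - e"] cshift_pow_add[of e "y - e" n] that rl by simp
  then show ?thesis using val r(1) by auto
qed

lemma chain_prod_Nil: "chain_prod [] = id"
  and chain_prod_Cons: "chain_prod (t # ts) = transpose (fst t) (snd t) \<circ> chain_prod ts"
  by (simp_all add: chain_prod_def)

lemma chain_prod_zip_snoc:
  "length I = length J \<Longrightarrow> chain_prod (zip (I @ [x]) (J @ [p])) = chain_prod (zip I J) \<circ> transpose x p"
proof (induct I J rule: list_induct2)
  case Nil
  then show ?case by (simp add: chain_prod_Nil chain_prod_Cons)
next
  case (Cons i I j J)
  then show ?case by (simp add: chain_prod_Cons o_assoc)
qed

lemma chain_prod_zip_permutes:
  "set I \<subseteq> S \<Longrightarrow> set J \<subseteq> S \<Longrightarrow> chain_prod (zip I J) permutes S"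
proof (induct I arbitrary: J)
  case (Cons i I)
  show ?case
  proof (cases J)
    case (Cons j J')
    then have "chain_prod (zip I J') permutes S" "transpose i j permutes S"
      using Cons.prems by (auto intro: Cons.hyps permutes_swap_id)
    then show ?thesis unfolding Cons by (simp only: zip_Cons_Cons chain_prod_Cons fst_conv snd_conv)
      (rule permutes_compose)
  qed (simp add: chain_prod_def permutes_def)
qed (simp add: chain_prod_def permutes_def)

lemma chain_prod_zip_fix: "y \<notin> set I \<Longrightarrow> y \<notin> set J \<Longrightarrow> chain_prod (zip I J) y = y"
proof (induct I arbitrary: J)
  case (Cons i I)
  then show ?case by (cases J) (auto simp: chain_prod_Nil chain_prod_Cons)
qed (simp add: chain_prod_Nil)

lemma park_last_no_wrap:
  assumes Os: "Os \<subseteq> {1..n}" and one: "1 \<in> Os" and x: "x \<in> {1..n}"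
    and free: "1 \<notin> set (park n Os (I @ [x]))" and p: "p = next_in n Os x"
  shows "park n Os (I @ [x]) = park n (Os - {p}) I @ [p]" and "p \<in> Os" and "p \<noteq> 1"
    and "x < p" and "\<And>y. x < y \<Longrightarrow> y < p \<Longrightarrow> y \<notin> Os"
proof -
  show park: "park n Os (I @ [x]) = park n (Os - {p}) I @ [p]"
    using park_append[of n Os I "[x]"] by (simp add: park_Cons p)
  show p1: "p \<noteq> 1" using free park by auto
  show "p \<in> Os" using next_in_mem[OF Os _ x] one p by auto
  show "x < p" "\<And>y. x < y \<Longrightarrow> y < p \<Longrightarrow> y \<notin> Os"
    using next_in_no_wrap[OF Os one x] p1 p by auto
qed

text \<open>Then no car wraps around, so \<open>I ! l < J ! l\<close>; and since the last car
  \<open>x\<close> parks at \<open>p\<close> with all points of \<open>(x, p]\<close> untouched by the earlier transpositions,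
  each new transposition \<open>(x p)\<close> removes one cycle from the product \<open>\<sigma>\<close> and adds one to
  \<open>\<sigma>\<^sup>-\<^sup>1 c\<close>.\<close>
lemma park_sorted_chain:
  assumes n: "1 \<le> n"
  shows "sorted I \<Longrightarrow> set I \<subseteq> {1..n} \<Longrightarrow> Os \<subseteq> {1..n} \<Longrightarrow> 1 \<in> Os \<Longrightarrow>
    length I < card Os \<Longrightarrow> 1 \<notin> set (park n Os I) \<Longrightarrow>
    (\<forall>l<length I. I ! l < park n Os I ! l) \<and>
    num_cycles n (chain_prod (zip I (park n Os I))) = n - length I \<and>
    num_cycles n (inv (chain_prod (zip I (park n Os I))) \<circ> long_cycle n) = length I + 1"
proof (induct I arbitrary: Os rule: rev_induct)
  case Nil
  then show ?case
    using num_cycles_id[unfolded id_def] num_cycles_long_cycle[OF n] by (simp add: chain_prod_Nil)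
next
  case (snoc x I)
  note Os = snoc.prems(3)
  have x: "x \<in> {1..n}" using snoc.prems(2) by simp
  define p where "p = next_in n Os x"
  define Os' where "Os' = Os - {p}"
  define J where "J = park n Os' I"
  have park: "park n Os (I @ [x]) = J @ [p]" and pOs: "p \<in> Os" and xp: "x < p"
    and gap: "\<And>y. x < y \<Longrightarrow> y < p \<Longrightarrow> y \<notin> Os" and p1: "p \<noteq> 1"
    using park_last_no_wrap[OF Os snoc.prems(4) x snoc.prems(6) p_def] by (auto simp: J_def Os'_def)
  have p: "p \<in> {1..n}" using pOs Os by auto
  have below: "\<And>y. y \<in> set I \<Longrightarrow> y \<le> x" using snoc.prems(1) by (auto simp: sorted_append)
  have "finite Os" using Os finite_subset by blast
  then have card': "card Os' = card Os - 1" using pOs by (simp add: Os'_def)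
  have Os': "Os' \<subseteq> {1..n}" using Os by (auto simp: Os'_def)
  have IH: "(\<forall>l<length I. I ! l < J ! l) \<and>
      num_cycles n (chain_prod (zip I J)) = n - length I \<and>
      num_cycles n (inv (chain_prod (zip I J)) \<circ> long_cycle n) = length I + 1"
    unfolding J_def
    by (rule snoc.hyps) (use snoc.prems p1 card' park Os' in \<open>auto simp: sorted_append Os'_def J_def\<close>)
  have "length J = length I \<and> distinct J \<and> set J \<subseteq> Os'"
    unfolding J_def by (rule park_distinct[OF Os']) (use snoc.prems card' in auto)
  then have lenJ: "length J = length I" and J: "set J \<subseteq> Os'" by auto
  define \<sigma> where "\<sigma> = chain_prod (zip I J)"
  have perm: "\<sigma> permutes {1..n}"
    unfolding \<sigma>_def by (rule chain_prod_zip_permutes) (use snoc.prems J Os' in auto)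
  have fixed: "\<sigma> y = y" if "x < y" "y \<le> p" for y
    unfolding \<sigma>_def
    by (rule chain_prod_zip_fix) (use that below gap J in \<open>force simp: Os'_def\<close>)+
  have prod: "chain_prod (zip (I @ [x]) (J @ [p])) = \<sigma> \<circ> transpose x p"
    using chain_prod_zip_snoc[OF lenJ[symmetric]] by (simp add: \<sigma>_def)
  have "num_cycles n (\<sigma> \<circ> transpose x p) + 1 = num_cycles n \<sigma>"
    by (rule num_cycles_append_transposition[OF perm x p xp fixed]) (use xp in simp_all)
  then have cycles: "num_cycles n (\<sigma> \<circ> transpose x p) = n - length (I @ [x])"
    using IH by (simp add: \<sigma>_def)
  have "num_cycles n (inv (\<sigma> \<circ> transpose x p) \<circ> long_cycle n)
      = num_cycles n (inv \<sigma> \<circ> long_cycle n) + 1"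
    by (rule num_cycles_complement_append_transposition[OF perm x p xp fixed])
  then have co_cycles: "num_cycles n (inv (\<sigma> \<circ> transpose x p) \<circ> long_cycle n) = length (I @ [x]) + 1"
    using IH by (simp add: \<sigma>_def)
  have "\<forall>l<length (I @ [x]). (I @ [x]) ! l < (J @ [p]) ! l"
    using IH lenJ xp by (auto simp: nth_append less_Suc_eq)
  then show ?case unfolding park prod by (intro conjI cycles co_cycles)
qed

lemma zip_in_Sigma_star:
  assumes kn: "k + 1 \<le> n" and I: "sorted I" "length I = k" "set I \<subseteq> {1..n}"
    and J: "length J = k" "set J \<subseteq> {1..n}" and less: "\<forall>l<k. I ! l < J ! l"
    and cycles: "num_cycles n (chain_prod (zip I J)) = n - k"
    and co_cycles: "num_cycles n (inv (chain_prod (zip I J)) \<circ> long_cycle n) = k + 1"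
  shows "zip I J \<in> Sigma_star n k"
  unfolding Sigma_star_def Sigma_chains_def
proof (intro CollectI conjI ballI)
  fix t assume "t \<in> set (zip I J)"
  then obtain l where l: "l < k" "t = (I ! l, J ! l)" using I J by (auto simp: in_set_zip)
  then have "I ! l \<in> {1..n}" "J ! l \<in> {1..n}" using I J nth_mem by (metis subsetD)+
  then show "is_transp n t" using l less by (auto simp: is_transp_def)
next
  show "plen n (chain_prod (zip I J)) = k" using cycles kn by (simp add: plen_def)
  show "preceq n (chain_prod (zip I J)) (long_cycle n)"
    using cycles co_cycles kn num_cycles_long_cycle[of n] by (simp add: preceq_def plen_def)
  show "sorted (map fst (zip I J))" using I J by simp
qed (use I J in simp)

lemma cpow_in: "1 \<le> n \<Longrightarrow> x \<in> {1..n} \<Longrightarrow> cpow n e x \<in> {1..n}"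
  unfolding cpow_def by (rule cshift_pow_in)

lemma cpow_inj: "1 \<le> n \<Longrightarrow> inj_on (cpow n e) {1..n}"
  unfolding cpow_def by (rule cshift_pow_inj)

lemma cpow_to_one:
  assumes r: "r \<in> {1..n}" shows "cpow n (1 - int r) r = 1"
proof (cases "r = 1")
  case False
  have "(1 - int r) mod int n = (1 - int r + int n) mod int n" by simp
  also have "\<dots> = int (n - r + 1)" using False r by (subst mod_pos_pos_trivial) auto
  finally have "nat ((1 - int r) mod int n) = n - r + 1" by (simp only: nat_int)
  then show ?thesis using cshift_pow_wrap[of r n] r by (simp add: cpow_def)
qed (simp add: cpow_def)

lemma residue_free:
  assumes B: "B \<subseteq> {1..n}" and A: "set A \<subseteq> {1..n}" and card: "card B = length A + 1"
  shows "B - set (park n B A) = {residue n A B}"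
proof -
  have P: "length (park n B A) = length A" "distinct (park n B A)" "set (park n B A) \<subseteq> B"
    using park_distinct[OF B A] card by auto
  have "finite B" using B finite_subset by blast
  then have "card (B - set (park n B A)) = 1"
    using P card by (simp add: card_Diff_subset distinct_card)
  then obtain r where r: "B - set (park n B A) = {r}" by (rule card_1_singletonE)
  then show ?thesis by (simp add: residue_def)
qed

lemma rotated_residue_is_one:
  assumes n: "1 \<le> n" and B: "B \<subseteq> {1..n}" and A: "set A \<subseteq> {1..n}"
    and card: "card B = length A + 1"
    and h: "h = cpow n (1 - int (residue n A B))"
  shows "1 \<in> h ` B" and "1 \<notin> set (park n (h ` B) (map h A))"
proof -
  define r where "r = residue n A B"
  have r: "r \<in> B" "r \<notin> set (park n B A)" using residue_free[OF B A card] by (auto simp: r_def)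
  then have hr: "h r = 1" using cpow_to_one B h by (auto simp: r_def)
  then show "1 \<in> h ` B" using r by force
  have "park n (h ` B) (map h A) = map h (park n B A)"
    unfolding h cpow_def by (rule park_rotate[OF n B A])
  moreover have "h y \<noteq> 1" if y: "y \<in> set (park n B A)" for y
  proof
    assume "h y = 1"
    moreover have "y \<in> {1..n}" "r \<in> {1..n}" using y r(1) park_in_range[OF n A, of B] B by auto
    ultimately have "y = r" using hr inj_onD[OF cpow_inj[OF n]] h by metis
    then show False using y r(2) by simp
  qed
  ultimately show "1 \<notin> set (park n (h ` B) (map h A))" by (metis imageE set_map)
qed

theorem lemma5p3:
  fixes n k :: nat and A :: "nat list" and B :: "nat set"
  assumes "n \<ge> 1" and "k \<ge> 1"
    and "length A = k" and "set A \<subseteq> {1..n}"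
    and "B \<subseteq> {1..n}" and "card B = k + 1"
  shows "let m = 1 - int (residue n A B);
             At = map (cpow n m) A;
             Bt = cpow n m ` B;
             I = sort At;
             J = park n Bt I
         in (\<forall>l < k. I ! l < J ! l) \<and> zip I J \<in> Sigma_star n k"
proof -
  note n = assms(1) and A = assms(3,4) and B = assms(5,6)
  define h where "h = cpow n (1 - int (residue n A B))"
  define I where "I = sort (map h A)"
  define J where "J = park n (h ` B) I"
  have hB: "h ` B \<subseteq> {1..n}" "card (h ` B) = k + 1"
    using B cpow_in[OF n] card_image[OF inj_on_subset[OF cpow_inj[OF n]]] by (auto simp: h_def)
  have I: "sorted I" "length I = k" "set I \<subseteq> {1..n}"
    using A cpow_in[OF n] by (auto simp: I_def h_def)
  note one = rotated_residue_is_one[OF n B(1) A(2) _ h_def]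
  have "set J = set (park n (h ` B) (map h A))"
    unfolding J_def I_def by (rule park_set_perm[OF hB(1)]) (use I hB in \<open>auto simp: I_def\<close>)
  then have free: "1 \<notin> set J" using one(2) A B by simp
  have chain: "(\<forall>l<k. I ! l < J ! l) \<and> num_cycles n (chain_prod (zip I J)) = n - k \<and>
      num_cycles n (inv (chain_prod (zip I J)) \<circ> long_cycle n) = k + 1"
    using park_sorted_chain[OF n I(1,3) hB(1) _ _ free[unfolded J_def]] one(1) A B I hB
    by (simp add: J_def)
  have J: "length J = k" "set J \<subseteq> {1..n}"
    using park_distinct[OF hB(1) I(3)] I hB by (auto simp: J_def)
  have "k + 1 \<le> n" using hB card_mono[of "{1..n}" "h ` B"] by simp
  then have "zip I J \<in> Sigma_star n k" using zip_in_Sigma_star I J chain by blast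
  then show ?thesis using chain by (simp add: Let_def h_def I_def J_def)
qed

end
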